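(* Let $n\ge1$ and $u,v\in\mathcal S_n$. Then $u$ is strongly shift equivalent to $v$ if and only if $u\sim_{ss}v$.
   Context: $[n]=\{1,\ldots,n\}$; $\mathcal S_n$ is the set of permutations of $[n]$ as words. Rigid shift: for a word $u=u_1\cdots u_n$ over $\mathbb P$, an integer $h\ge0$ (cut height) and an integer $t$, suppose that for every $i$ with $u_i>h$ we have $1\le i+t\le n$ and $u_{i+t}\ge h$. Then the word $v$ with $v_j=\min(u_j,h)+\max(u_{j-t}-h,0)$ for $j\in[n]$ (the second term taken $0$ if $j-t\notin[n]$) is a rigid shift of $u$; geometrically, one cuts the skyline diagram of $u$ (columns of $u_i$ unit squares) at height $h$ and rigidly translates all squares above the cut horizontally by $t$ so each moved column rests on a column of height $h$. Two permutations are strongly shift equivalent if one can be obtained from the other by a finite sequence of rigid shifts. Super-strong Wilf equivalence: for finite words $u,w$ over $\mathbb P$, $j$ is an embedding index of $u$ in $w$ if $j+|u|-1\le|w|$ and $u_k\le w_{j+k-1}$ for all $k$; $Em(u,w)$ is the set of such $j$; $u\sim_{ss}v$ if there is a bijection $f$ of the set of finite words over $\mathbb P$ preserving length and sum of letters with $Em(u,w)=Em(v,f(w))$ for all $w$. *)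

theory Defs
  imports "HOL-Combinatorics.Multiset_Permutations"
begin

text \<open>Words over the positive integers are lists of naturals with all letters at least 1.
  Positions are 0-indexed in Isabelle lists; position i here corresponds to position i+1
  in the paper.\<close>

definition pos_words :: "nat list set" where
  "pos_words = {w. \<forall>x\<in>set w. 1 \<le> x}"

definition rigid_shift_ht :: "nat \<Rightarrow> int \<Rightarrow> nat list \<Rightarrow> nat list \<Rightarrow> bool" where
  "rigid_shift_ht h t u v \<longleftrightarrow>
     u \<in> pos_words \<and>
     (\<forall>i < length u. u ! i > h \<longrightarrow>
         0 \<le> int i + t \<and> int i + t < int (length u) \<and> u ! nat (int i + t) \<ge> h) \<and>
     length v = length u \<and>
     (\<forall>j < length u. v ! j = min (u ! j) h +
         (if 0 \<le> int j - t \<and> int j - t < int (length u)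
          then u ! nat (int j - t) - h else 0))"

definition rigid_shift :: "nat list \<Rightarrow> nat list \<Rightarrow> bool" where
  "rigid_shift u v \<longleftrightarrow> (\<exists>h t. rigid_shift_ht h t u v)"

definition strongly_shift_equiv :: "nat list \<Rightarrow> nat list \<Rightarrow> bool" where
  "strongly_shift_equiv u v \<longleftrightarrow> rigid_shift\<^sup>*\<^sup>* u v"

text \<open>Embedding indices (1-indexed as in the paper).\<close>

definition Em :: "nat list \<Rightarrow> nat list \<Rightarrow> nat set" where
  "Em u w = {j. 1 \<le> j \<and> j + length u - 1 \<le> length w \<and>
               (\<forall>k < length u. u ! k \<le> w ! (j + k - 1))}"

definition super_strong_wilf :: "nat list \<Rightarrow> nat list \<Rightarrow> bool" where
  "super_strong_wilf u v \<longleftrightarrow>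
     (\<exists>f. bij_betw f pos_words pos_words \<and>
          (\<forall>w\<in>pos_words. length (f w) = length w \<and> sum_list (f w) = sum_list w \<and>
                          Em u w = Em v (f w)))"

end

theory Submission
  imports Defs
begin

text \<open>Cut the skyline of a word at every height \<open>c\<close>: the level \<open>level w c\<close> is the set of
  positions carrying a letter \<open>\<ge> c\<close>. A rigid shift at height \<open>h\<close> fixes the levels up to \<open>h\<close>
  and translates all higher ones by \<open>t\<close>; conversely, if every level of \<open>v\<close> is a translate of
  the corresponding level of \<open>u\<close>, shifts can move the levels into place one at a time, lowest
  first. So strong shift equivalence means exactly that corresponding levels are translates.

  Super-strong Wilf equivalence amounts to equal numbers of words of each length and sum whose
  set of embedding indices contains a given \<open>T\<close> (Moebius inversion over supersets). These
  words are exactly those dominating a least word, and their number depends only on its sum,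
  which is the length plus the sizes of the unions of the translates of the levels by \<open>T\<close>.
  Translating levels preserves those sizes. Conversely, for permutations inclusion-exclusion
  turns equal union sizes into equal sizes of intersections of translates; taking \<open>T\<close> to be
  the reflection of one level forces, by induction on the height, the same level of \<open>v\<close> to
  contain, hence to equal, a translate of that level of \<open>u\<close>.\<close>

section \<open>Levels and rigid shifts\<close>

text \<open>Positions are integers so that the horizontal translation of a rigid shift is an image
  under \<open>(+) t\<close>.\<close>

definition level :: "nat list \<Rightarrow> nat \<Rightarrow> int set" where
  "level w c = {i. 0 \<le> i \<and> i < int (length w) \<and> c \<le> w ! nat i}"

lemma finite_level [simp]: "finite (level w c)"
  by (rule finite_subset[of _ "{0..<int (length w)}"]) (auto simp: level_def)

lemma level_antimono: "c \<le> d \<Longrightarrow> level w d \<subseteq> level w c"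
  unfolding level_def by auto

lemma level_le_one: "w \<in> pos_words \<Longrightarrow> c \<le> 1 \<Longrightarrow> level w c = {0..<int (length w)}"
  unfolding level_def pos_words_def by (auto; metis nat_less_iff nth_mem le_trans)

lemma level_gt_sum_list: "sum_list w < c \<Longrightarrow> level w c = {}"
  unfolding level_def by (auto; metis elem_le_sum_list le_trans nat_less_iff not_le)

lemma nth_eq_if_level_eq:
  assumes "length w = length v" "\<And>c. level w c = level v c"
  shows "w = v"
proof (rule nth_equalityI)
  fix i assume "i < length w"
  then have "int i \<in> level w c \<longleftrightarrow> int i \<in> level v c" for c
    using assms(2) by simp
  then have "c \<le> w ! i \<longleftrightarrow> c \<le> v ! i" for c
    using \<open>i < length w\<close> assms(1) unfolding level_def by simp
  then show "w ! i = v ! i" by (metis order.refl order.antisym)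
qed fact

lemma rigid_shift_ht_nth:
  assumes shift: "rigid_shift_ht h t u v" and j: "j < length u"
  shows "0 \<le> int j - t \<and> int j - t < int (length u) \<and> h < u ! nat (int j - t) \<Longrightarrow>
           v ! j = u ! nat (int j - t) \<and> h \<le> u ! j"
    and "\<not> (0 \<le> int j - t \<and> int j - t < int (length u) \<and> h < u ! nat (int j - t)) \<Longrightarrow>
           v ! j = min (u ! j) h"
proof -
  have lands: "\<And>i. i < length u \<Longrightarrow> h < u ! i \<Longrightarrow>
      0 \<le> int i + t \<and> int i + t < int (length u) \<and> h \<le> u ! nat (int i + t)"
    and vj: "v ! j = min (u ! j) h +
      (if 0 \<le> int j - t \<and> int j - t < int (length u) then u ! nat (int j - t) - h else 0)"
    using shift j unfolding rigid_shift_ht_def by auto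
  show "v ! j = u ! nat (int j - t) \<and> h \<le> u ! j"
    if src: "0 \<le> int j - t \<and> int j - t < int (length u) \<and> h < u ! nat (int j - t)"
  proof -
    have "h \<le> u ! nat (int (nat (int j - t)) + t)"
      using lands[of "nat (int j - t)"] src by auto
    with src have "h \<le> u ! j" by simp
    with src vj show ?thesis by simp
  qed
  show "\<not> (0 \<le> int j - t \<and> int j - t < int (length u) \<and> h < u ! nat (int j - t)) \<Longrightarrow>
      v ! j = min (u ! j) h"
    using vj by auto
qed

lemma level_rigid_shift:
  assumes shift: "rigid_shift_ht h t u v"
  shows "level v c = (if c \<le> h then level u c else (+) t ` level u c)"
proof -
  have len: "length v = length u" using shift unfolding rigid_shift_ht_def by simp
  have lands: "\<And>i. i < length u \<Longrightarrow> h < u ! i \<Longrightarrow> 0 \<le> int i + t \<and> int i + t < int (length u)"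
    using shift unfolding rigid_shift_ht_def by auto
  note vj = rigid_shift_ht_nth[OF shift]
  show ?thesis
  proof (cases "c \<le> h")
    case True
    then have "c \<le> v ! j \<longleftrightarrow> c \<le> u ! j" if "j < length u" for j
      using vj[OF that] \<open>c \<le> h\<close>
      by (cases "0 \<le> int j - t \<and> int j - t < int (length u) \<and> h < u ! nat (int j - t)") auto
    with True show ?thesis unfolding level_def len by auto
  next
    case False
    have "c \<le> v ! j \<longleftrightarrow> 0 \<le> int j - t \<and> int j - t < int (length u) \<and> c \<le> u ! nat (int j - t)"
      if "j < length u" for j
      using vj[OF that] False
      by (cases "0 \<le> int j - t \<and> int j - t < int (length u) \<and> h < u ! nat (int j - t)") auto
    then have "level v c = {x. 0 \<le> x - t \<and> x - t < int (length u) \<and> c \<le> u ! nat (x - t) \<and>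
                                0 \<le> x \<and> x < int (length u)}"
      unfolding level_def len by (auto; metis int_nat_eq nat_less_iff)
    also have "\<dots> = (+) t ` level u c"
    proof (intro equalityI subsetI)
      fix x assume "x \<in> {x. 0 \<le> x - t \<and> x - t < int (length u) \<and> c \<le> u ! nat (x - t) \<and>
                                0 \<le> x \<and> x < int (length u)}"
      then have "x - t \<in> level u c" unfolding level_def by simp
      then show "x \<in> (+) t ` level u c" by (rule rev_image_eqI) simp
    next
      fix x assume "x \<in> (+) t ` level u c"
      then obtain i where i: "i \<in> level u c" "x = t + i" by blast
      then have "nat i < length u" "h < u ! nat i" "0 \<le> i"
        using False unfolding level_def by auto
      with lands[of "nat i"] i show "x \<in> {x. 0 \<le> x - t \<and> x - t < int (length u) \<and>
                                c \<le> u ! nat (x - t) \<and> 0 \<le> x \<and> x < int (length u)}"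
        unfolding level_def by auto
    qed
    finally show ?thesis using False by simp
  qed
qed

definition levels_translated :: "nat list \<Rightarrow> nat list \<Rightarrow> bool" where
  "levels_translated u v \<longleftrightarrow> length u = length v \<and> (\<forall>c. \<exists>t. level v c = (+) t ` level u c)"

lemma levels_translated_refl: "levels_translated u u"
  unfolding levels_translated_def by (auto intro!: exI[of _ 0])

lemma levels_translated_sym: "levels_translated u v \<Longrightarrow> levels_translated v u"
  unfolding levels_translated_def
proof (elim conjE, intro conjI allI)
  fix c assume "\<forall>c. \<exists>t. level v c = (+) t ` level u c"
  then obtain t where "level v c = (+) t ` level u c" by blast
  then have "level u c = (+) (- t) ` level v c" by (simp add: image_image)
  then show "\<exists>t. level u c = (+) t ` level v c" ..
qed simp

lemma levels_translated_trans:
  "levels_translated u v \<Longrightarrow> levels_translated v w \<Longrightarrow> levels_translated u w"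
  unfolding levels_translated_def
proof (elim conjE, intro conjI allI)
  fix c assume "\<forall>c. \<exists>t. level v c = (+) t ` level u c" "\<forall>c. \<exists>t. level w c = (+) t ` level v c"
  then obtain s t where "level v c = (+) s ` level u c" "level w c = (+) t ` level v c" by blast
  then have "level w c = (+) (t + s) ` level u c" by (simp add: image_image add.assoc)
  then show "\<exists>t. level w c = (+) t ` level u c" ..
qed simp

lemma levels_translated_rigid_shift_ht: "rigid_shift_ht h t u v \<Longrightarrow> levels_translated u v"
  unfolding levels_translated_def
proof (intro conjI allI)
  fix c assume "rigid_shift_ht h t u v"
  then show "\<exists>s. level v c = (+) s ` level u c"
    using level_rigid_shift[of h t u v c] by (cases "c \<le> h") (auto intro: exI[of _ 0])
qed (simp add: rigid_shift_ht_def)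

lemma strongly_shift_equiv_imp_levels_translated:
  "strongly_shift_equiv u v \<Longrightarrow> levels_translated u v"
  unfolding strongly_shift_equiv_def
proof (induction rule: rtranclp_induct)
  case (step v w)
  then show ?case
    unfolding rigid_shift_def by (blast intro: levels_translated_trans levels_translated_rigid_shift_ht)
qed (rule levels_translated_refl)

lemma rigid_shift_ht_exists:
  assumes w: "w \<in> pos_words" and h: "1 \<le> h" and lands: "(+) t ` level w (Suc h) \<subseteq> level w h"
  shows "\<exists>w'. rigid_shift_ht h t w w' \<and> w' \<in> pos_words"
proof -
  define w' where "w' = map (\<lambda>j. min (w ! j) h +
      (if 0 \<le> int j - t \<and> int j - t < int (length w) then w ! nat (int j - t) - h else 0)) [0..<length w]"
  have "rigid_shift_ht h t w w'"
    unfolding rigid_shift_ht_def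
  proof (intro conjI allI impI)
    fix i assume "i < length w" "h < w ! i"
    then have "int i \<in> level w (Suc h)" unfolding level_def by simp
    then have "t + int i \<in> level w h" using lands by blast
    then show "0 \<le> int i + t" "int i + t < int (length w)" "h \<le> w ! nat (int i + t)"
      unfolding level_def by (auto simp: add.commute)
  qed (auto simp: w w'_def)
  moreover have "1 \<le> min (w ! j) h" if "j < length w" for j
    using w h that unfolding pos_words_def by simp
  then have "w' \<in> pos_words"
    unfolding w'_def pos_words_def by (auto simp: in_set_conv_nth trans_le_add1)
  ultimately show ?thesis by blast
qed

text \<open>One shift at cut height \<open>c\<close> moves level \<open>c + 1\<close> of \<open>w\<close> onto level \<open>c + 1\<close> of \<open>v\<close>
  without touching the (already correct) lower levels.\<close>

lemma levels_translated_align_step: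
  assumes w: "w \<in> pos_words" and wv: "levels_translated w v" and c: "1 \<le> c"
    and agree: "\<forall>d\<le>c. level w d = level v d"
  shows "\<exists>w'. rigid_shift w w' \<and> w' \<in> pos_words \<and> levels_translated w' v \<and>
           (\<forall>d\<le>Suc c. level w' d = level v d)"
proof -
  obtain t where t: "level v (Suc c) = (+) t ` level w (Suc c)"
    using wv unfolding levels_translated_def by blast
  have "(+) t ` level w (Suc c) \<subseteq> level w c"
    using t agree level_antimono[of c "Suc c" v] by auto
  then obtain w' where shift: "rigid_shift_ht c t w w'" and w': "w' \<in> pos_words"
    using rigid_shift_ht_exists[OF w c] by blast
  have "level w' d = level v d" if "d \<le> Suc c" for d
    using level_rigid_shift[OF shift, of d] agree t that by (cases "d \<le> c") (auto simp: le_Suc_eq)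
  moreover have "levels_translated w' v"
    using levels_translated_sym[OF levels_translated_rigid_shift_ht[OF shift]] wv
    by (rule levels_translated_trans)
  ultimately show ?thesis using shift w' unfolding rigid_shift_def by blast
qed

lemma levels_translated_imp_strongly_shift_equiv:
  assumes u: "u \<in> pos_words" and v: "v \<in> pos_words" and uv: "levels_translated u v"
  shows "strongly_shift_equiv u v"
proof -
  have "\<exists>w. rigid_shift\<^sup>*\<^sup>* u w \<and> w \<in> pos_words \<and> levels_translated w v \<and>
            (\<forall>d\<le>Suc k. level w d = level v d)" for k
  proof (induction k)
    case 0
    have "length u = length v" using uv unfolding levels_translated_def by simp
    then show ?case using u v uv level_le_one[OF u] level_le_one[OF v] by auto
  next
    case (Suc k)
    then obtain w where "rigid_shift\<^sup>*\<^sup>* u w" "w \<in> pos_words" "levels_translated w v"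
      "\<forall>d\<le>Suc k. level w d = level v d" by blast
    with levels_translated_align_step[of w v "Suc k"] obtain w' where "rigid_shift w w'"
      "w' \<in> pos_words" "levels_translated w' v" "\<forall>d\<le>Suc (Suc k). level w' d = level v d"
      by auto
    with \<open>rigid_shift\<^sup>*\<^sup>* u w\<close> show ?case by (meson rtranclp.rtrancl_into_rtrancl)
  qed
  then obtain w where uw: "rigid_shift\<^sup>*\<^sup>* u w" and wv: "levels_translated w v"
    and agree: "\<forall>d\<le>Suc (sum_list v). level w d = level v d" by blast
  have "level w d = level v d" for d
  proof (cases "d \<le> Suc (sum_list v)")
    case False
    then have "level v d = {}" by (intro level_gt_sum_list) simp
    moreover obtain t where "level v d = (+) t ` level w d"
      using wv unfolding levels_translated_def by blast
    ultimately show ?thesis by simp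
  qed (use agree in simp)
  then have "w = v"
    using wv by (intro nth_eq_if_level_eq) (auto simp: levels_translated_def)
  with uw show ?thesis unfolding strongly_shift_equiv_def by simp
qed

section \<open>Counting words by their embedding indices\<close>

lemma card_key_fibres_eq_if_bij:
  assumes h: "bij_betw h A A" and key: "\<forall>x\<in>A. g (h x) = f x"
  shows "card {x\<in>A. f x = k} = card {x\<in>A. g x = k}"
proof -
  have image: "h ` {x\<in>A. f x = k} = {x\<in>A. g x = k}"
  proof (intro equalityI subsetI)
    fix y assume "y \<in> h ` {x\<in>A. f x = k}"
    then obtain x where "x \<in> A" "f x = k" "y = h x" by blast
    with bij_betwE[OF h] key show "y \<in> {x\<in>A. g x = k}" by auto
  next
    fix y assume y: "y \<in> {x\<in>A. g x = k}"
    then obtain x where "x \<in> A" "y = h x" using bij_betw_imp_surj_on[OF h] by blast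
    with y key show "y \<in> h ` {x\<in>A. f x = k}" by auto
  qed
  have "inj_on h {x\<in>A. f x = k}"
    using bij_betw_imp_inj_on[OF h] by (rule inj_on_subset) blast
  then have "card (h ` {x\<in>A. f x = k}) = card {x\<in>A. f x = k}" by (rule card_image)
  with image show ?thesis by simp
qed

lemma bij_if_card_key_fibres_eq:
  assumes fin: "\<And>k. finite {x\<in>A. f x = k}" "\<And>k. finite {x\<in>A. g x = k}"
    and card: "\<And>k. card {x\<in>A. f x = k} = card {x\<in>A. g x = k}"
  shows "\<exists>h. bij_betw h A A \<and> (\<forall>x\<in>A. g (h x) = f x)"
proof -
  have "\<exists>G. bij_betw G {x\<in>A. f x = k} {x\<in>A. g x = k}" for k
    using card[of k] fin[of k] by (metis finite_same_card_bij)
  then obtain G where G: "\<And>k. bij_betw (G k) {x\<in>A. f x = k} {x\<in>A. g x = k}" by metis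
  define h where "h x = G (f x) x" for x
  have h: "h x \<in> A" "g (h x) = f x" if "x \<in> A" for x
    using bij_betwE[OF G] that unfolding h_def by blast+
  have "inj_on h A"
  proof
    fix x y assume "x \<in> A" "y \<in> A" "h x = h y"
    then have "f x = f y" using h(2) by metis
    with \<open>x \<in> A\<close> \<open>y \<in> A\<close> \<open>h x = h y\<close> show "x = y"
      using bij_betw_imp_inj_on[OF G, of "f x"] unfolding h_def by (auto dest: inj_onD)
  qed
  moreover have "A \<subseteq> h ` A"
  proof
    fix y assume "y \<in> A"
    then obtain x where "x \<in> A" "f x = g y" "G (g y) x = y"
      using bij_betw_imp_surj_on[OF G, of "g y"] by force
    then show "y \<in> h ` A" unfolding h_def by force
  qed
  moreover have "h ` A \<subseteq> A" using h(1) by blast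
  ultimately show ?thesis using h(2) by (blast intro: bij_betw_imageI)
qed

definition words_with_Em :: "nat list \<Rightarrow> nat \<Rightarrow> nat \<Rightarrow> nat set \<Rightarrow> nat list set" where
  "words_with_Em u l s S = {w \<in> pos_words. length w = l \<and> sum_list w = s \<and> Em u w = S}"

definition words_with_Em_superset :: "nat list \<Rightarrow> nat \<Rightarrow> nat \<Rightarrow> nat set \<Rightarrow> nat list set" where
  "words_with_Em_superset u l s T = {w \<in> pos_words. length w = l \<and> sum_list w = s \<and> T \<subseteq> Em u w}"

lemma finite_lists_length_sum_list: "finite {w :: nat list. length w = l \<and> sum_list w = s}"
  by (rule finite_subset[OF _ finite_lists_length_eq[of "{0..s}" l]]) (auto simp: member_le_sum_list)

lemma finite_words_with_Em [simp]: "finite (words_with_Em u l s S)"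
  by (rule finite_subset[OF _ finite_lists_length_sum_list[of l s]]) (auto simp: words_with_Em_def)

lemma Em_subset: "Em u w \<subseteq> {1..Suc (length w)}"
  unfolding Em_def by auto

lemma super_strong_wilf_iff_card_words_with_Em:
  "super_strong_wilf u v \<longleftrightarrow> (\<forall>l s S. card (words_with_Em u l s S) = card (words_with_Em v l s S))"
proof -
  define key where "key x w = (length w, sum_list w, Em x w)" for x w
  have fibre: "{w\<in>pos_words. key x w = (l, s, S)} = words_with_Em x l s S" for x l s S
    unfolding key_def words_with_Em_def by auto
  have "super_strong_wilf u v \<longleftrightarrow> (\<exists>h. bij_betw h pos_words pos_words \<and>
      (\<forall>w\<in>pos_words. key v (h w) = key u w))"
    unfolding super_strong_wilf_def key_def by (intro ex_cong1 conj_cong refl ball_cong) auto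
  also have "\<dots> \<longleftrightarrow> (\<forall>k. card {w\<in>pos_words. key u w = k} = card {w\<in>pos_words. key v w = k})"
  proof
    assume "\<forall>k. card {w\<in>pos_words. key u w = k} = card {w\<in>pos_words. key v w = k}"
    moreover have "finite {w\<in>pos_words. key x w = k}" for x k
      using fibre by (cases k) simp
    ultimately show "\<exists>h. bij_betw h pos_words pos_words \<and> (\<forall>w\<in>pos_words. key v (h w) = key u w)"
      by (intro bij_if_card_key_fibres_eq) auto
  qed (auto intro: card_key_fibres_eq_if_bij)
  finally show ?thesis by (simp only: split_paired_All fibre)
qed

lemma eq_if_superset_sums_eq:
  fixes a b :: "'a set \<Rightarrow> 'b::cancel_comm_monoid_add"
  assumes U: "finite U"
    and sums: "\<And>T. T \<subseteq> U \<Longrightarrow> (\<Sum>S | T \<subseteq> S \<and> S \<subseteq> U. a S) = (\<Sum>S | T \<subseteq> S \<and> S \<subseteq> U. b S)"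
  shows "S \<subseteq> U \<Longrightarrow> a S = b S"
proof (induction "card (U - S)" arbitrary: S rule: less_induct)
  case (less S)
  have fin: "finite {S'. S \<subset> S' \<and> S' \<subseteq> U}"
    using U by (rule finite_subset[rotated, OF finite_Pow_iff[THEN iffD2]]) auto
  have split: "{S'. S \<subseteq> S' \<and> S' \<subseteq> U} = insert S {S'. S \<subset> S' \<and> S' \<subseteq> U}"
    using less.prems by auto
  have "(\<Sum>S' | S \<subset> S' \<and> S' \<subseteq> U. a S') = (\<Sum>S' | S \<subset> S' \<and> S' \<subseteq> U. b S')"
  proof (rule sum.cong[OF refl])
    fix S' assume S': "S' \<in> {S'. S \<subset> S' \<and> S' \<subseteq> U}"
    then have "card (U - S') < card (U - S)" using U by (intro psubset_card_mono) auto
    with S' show "a S' = b S'" by (intro less.hyps) auto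
  qed
  with sums[OF less.prems] show ?case unfolding split by (simp add: fin)
qed

lemma card_words_with_Em_superset_eq_sum:
  assumes "T \<subseteq> {1..Suc l}"
  shows "card (words_with_Em_superset u l s T)
       = (\<Sum>S | T \<subseteq> S \<and> S \<subseteq> {1..Suc l}. card (words_with_Em u l s S))"
proof -
  have "words_with_Em_superset u l s T = (\<Union>S \<in> {S. T \<subseteq> S \<and> S \<subseteq> {1..Suc l}}. words_with_Em u l s S)"
    unfolding words_with_Em_superset_def words_with_Em_def using Em_subset by fastforce
  moreover have "finite {S. T \<subseteq> S \<and> S \<subseteq> {1..Suc l}}"
    by (rule finite_subset[of _ "Pow {1..Suc l}"]) auto
  moreover have "words_with_Em u l s S \<inter> words_with_Em u l s S' = {}" if "S \<noteq> S'" for S S'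
    using that unfolding words_with_Em_def by auto
  ultimately show ?thesis by (simp add: card_UN_disjoint)
qed

lemma super_strong_wilf_iff_card_words_with_Em_superset:
  "super_strong_wilf u v \<longleftrightarrow>
     (\<forall>l s T. card (words_with_Em_superset u l s T) = card (words_with_Em_superset v l s T))"
proof -
  have empty: "words_with_Em x l s S = {}" "words_with_Em_superset x l s S = {}"
    if "\<not> S \<subseteq> {1..Suc l}" for x l s S
    using that Em_subset unfolding words_with_Em_def words_with_Em_superset_def by fastforce+
  have "(\<forall>S. card (words_with_Em u l s S) = card (words_with_Em v l s S)) \<longleftrightarrow>
        (\<forall>T. card (words_with_Em_superset u l s T) = card (words_with_Em_superset v l s T))" for l s
  proof
    assume fib: "\<forall>S. card (words_with_Em u l s S) = card (words_with_Em v l s S)"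
    show "\<forall>T. card (words_with_Em_superset u l s T) = card (words_with_Em_superset v l s T)"
    proof
      fix T show "card (words_with_Em_superset u l s T) = card (words_with_Em_superset v l s T)"
        using fib by (cases "T \<subseteq> {1..Suc l}") (simp_all add: card_words_with_Em_superset_eq_sum empty)
    qed
  next
    assume sup: "\<forall>T. card (words_with_Em_superset u l s T) = card (words_with_Em_superset v l s T)"
    show "\<forall>S. card (words_with_Em u l s S) = card (words_with_Em v l s S)"
    proof
      fix S show "card (words_with_Em u l s S) = card (words_with_Em v l s S)"
      proof (cases "S \<subseteq> {1..Suc l}")
        case True
        have "(\<Sum>S | T \<subseteq> S \<and> S \<subseteq> {1..Suc l}. card (words_with_Em u l s S))
            = (\<Sum>S | T \<subseteq> S \<and> S \<subseteq> {1..Suc l}. card (words_with_Em v l s S))"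
          if "T \<subseteq> {1..Suc l}" for T
          using sup card_words_with_Em_superset_eq_sum[OF that] by metis
        then show ?thesis by (rule eq_if_superset_sums_eq[OF finite_atLeastAtMost _ True])
      qed (simp add: empty)
    qed
  qed
  then show ?thesis unfolding super_strong_wilf_iff_card_words_with_Em by blast
qed

section \<open>The least word with prescribed embedding indices\<close>

definition window_starts :: "nat list \<Rightarrow> nat \<Rightarrow> nat set" where
  "window_starts u l = {j. 1 \<le> j \<and> j + length u - 1 \<le> l}"

lemma Em_subset_window_starts: "Em u w \<subseteq> window_starts u (length w)"
  unfolding Em_def window_starts_def by auto

text \<open>The smallest letter a positive word can carry at (0-based) position \<open>p\<close> when every
  \<open>j \<in> T\<close> is to be an embedding index of \<open>u\<close>.\<close>

definition least_letter :: "nat list \<Rightarrow> nat set \<Rightarrow> nat \<Rightarrow> nat" where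
  "least_letter u T p = Max (insert 1 {u ! (p + 1 - j) | j. j \<in> T \<and> j \<le> p + 1 \<and> p + 1 - j < length u})"

definition least_word :: "nat list \<Rightarrow> nat set \<Rightarrow> nat \<Rightarrow> nat list" where
  "least_word u T l = map (least_letter u T) [0..<l]"

lemma finite_least_letter_candidates:
  "finite {u ! (p + 1 - j) | j. j \<in> T \<and> j \<le> p + 1 \<and> p + 1 - j < length u}"
  by (rule finite_subset[of _ "set u"]) auto

lemma least_letter_ge_iff:
  "c \<le> least_letter u T p \<longleftrightarrow>
     c \<le> 1 \<or> (\<exists>j\<in>T. j \<le> p + 1 \<and> p + 1 - j < length u \<and> c \<le> u ! (p + 1 - j))"
  unfolding least_letter_def using finite_least_letter_candidates by (subst Max_ge_iff) auto

lemma least_letter_le_iff: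
  "least_letter u T p \<le> c \<longleftrightarrow>
     1 \<le> c \<and> (\<forall>j\<in>T. j \<le> p + 1 \<and> p + 1 - j < length u \<longrightarrow> u ! (p + 1 - j) \<le> c)"
  unfolding least_letter_def using finite_least_letter_candidates by (subst Max_le_iff) auto

lemma one_le_least_letter: "1 \<le> least_letter u T p"
  by (simp add: least_letter_ge_iff)

lemma subset_Em_iff_least_letter_le:
  assumes w: "w \<in> pos_words" and T: "T \<subseteq> window_starts u (length w)"
  shows "T \<subseteq> Em u w \<longleftrightarrow> (\<forall>p<length w. least_letter u T p \<le> w ! p)"
proof
  assume TEm: "T \<subseteq> Em u w"
  show "\<forall>p<length w. least_letter u T p \<le> w ! p"
  proof (intro allI impI)
    fix p assume p: "p < length w"
    have "u ! (p + 1 - j) \<le> w ! p" if "j \<in> T" "j \<le> p + 1" "p + 1 - j < length u" for j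
      using TEm that unfolding Em_def by (auto dest!: spec[of _ "p + 1 - j"])
    moreover have "1 \<le> w ! p" using w p unfolding pos_words_def by simp
    ultimately show "least_letter u T p \<le> w ! p" by (simp add: least_letter_le_iff)
  qed
next
  assume le: "\<forall>p<length w. least_letter u T p \<le> w ! p"
  show "T \<subseteq> Em u w"
  proof
    fix j assume j: "j \<in> T"
    then have j1: "1 \<le> j" "j + length u - 1 \<le> length w" using T unfolding window_starts_def by auto
    have "u ! k \<le> w ! (j + k - 1)" if k: "k < length u" for k
    proof -
      have "u ! k \<le> least_letter u T (j + k - 1)"
        unfolding least_letter_ge_iff using j j1 k by (intro disjI2 bexI[of _ j]) auto
      also have "\<dots> \<le> w ! (j + k - 1)" using le j1 k by simp
      finally show ?thesis .
    qed
    with j1 show "j \<in> Em u w" unfolding Em_def by auto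
  qed
qed

definition dominating_words :: "nat list \<Rightarrow> nat \<Rightarrow> nat list set" where
  "dominating_words b s = {w. length w = length b \<and> sum_list w = s \<and> (\<forall>p<length b. b ! p \<le> w ! p)}"

lemma words_with_Em_superset_eq_dominating_words:
  assumes T: "T \<subseteq> window_starts u l"
  shows "words_with_Em_superset u l s T = dominating_words (least_word u T l) s"
proof (rule set_eqI)
  fix w show "w \<in> words_with_Em_superset u l s T \<longleftrightarrow> w \<in> dominating_words (least_word u T l) s"
  proof (cases "length w = l")
    case True
    have "w \<in> pos_words" if "\<forall>p<l. least_letter u T p \<le> w ! p"
      using that True one_le_least_letter[of u T] unfolding pos_words_def
      by (auto simp: in_set_conv_nth) (metis order_trans)
    with True T show ?thesis
      unfolding words_with_Em_superset_def dominating_words_def least_word_def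
      using subset_Em_iff_least_letter_le[of w T u] by auto
  qed (auto simp: words_with_Em_superset_def dominating_words_def least_word_def)
qed

lemma finite_dominating_words [simp]: "finite (dominating_words b s)"
  by (rule finite_subset[OF _ finite_lists_length_sum_list[of "length b" s]])
    (auto simp: dominating_words_def)

lemma self_mem_dominating_words: "b \<in> dominating_words b (sum_list b)"
  unfolding dominating_words_def by simp

lemma sum_list_le_if_mem_dominating_words: "w \<in> dominating_words b s \<Longrightarrow> sum_list b \<le> s"
  unfolding dominating_words_def by (auto simp: sum_list_sum_nth atLeast0LessThan intro!: sum_mono)

lemma card_dominating_words_le:
  assumes len: "length b' = length b" and sum: "sum_list b' = sum_list b"
  shows "card (dominating_words b s) \<le> card (dominating_words b' s)"
proof -
  define l where "l = length b"
  define F where "F w = map (\<lambda>p. w ! p - b ! p + b' ! p) [0..<l]" for w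
  have "F w \<in> dominating_words b' s" if w: "w \<in> dominating_words b s" for w
  proof -
    have le: "\<forall>p\<in>{..<l}. b ! p \<le> w ! p" and lw: "length w = l"
      using w unfolding dominating_words_def l_def by auto
    have "sum_list (F w) = (\<Sum>p<l. w ! p - b ! p) + (\<Sum>p<l. b' ! p)"
      unfolding F_def by (simp add: sum_list_sum_nth sum.distrib atLeast0LessThan)
    also have "(\<Sum>p<l. w ! p - b ! p) = (\<Sum>p<l. w ! p) - (\<Sum>p<l. b ! p)"
      using le by (intro sum_subtractf_nat) auto
    also have "\<dots> + (\<Sum>p<l. b' ! p) = sum_list w - sum_list b + sum_list b'"
      using lw len by (simp add: sum_list_sum_nth atLeast0LessThan l_def)
    also have "\<dots> = s"
      using w sum sum_list_le_if_mem_dominating_words[OF w] unfolding dominating_words_def by simp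
    finally show ?thesis using len unfolding F_def dominating_words_def l_def by simp
  qed
  moreover have "inj_on F (dominating_words b s)"
  proof
    fix x y assume x: "x \<in> dominating_words b s" and y: "y \<in> dominating_words b s"
      and Fxy: "F x = F y"
    have "x ! p = y ! p" if "p < l" for p
    proof -
      have "x ! p - b ! p + b' ! p = y ! p - b ! p + b' ! p"
        using arg_cong[OF Fxy, of "\<lambda>z. z ! p"] that unfolding F_def by simp
      moreover have "b ! p \<le> x ! p" "b ! p \<le> y ! p"
        using x y that unfolding dominating_words_def l_def by auto
      ultimately show ?thesis by linarith
    qed
    with x y show "x = y" unfolding dominating_words_def l_def by (simp add: nth_equalityI)
  qed
  ultimately show ?thesis by (intro card_inj_on_le[OF _ _ finite_dominating_words]) auto
qed

lemma card_dominating_words_eq: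
  "length b' = length b \<Longrightarrow> sum_list b' = sum_list b \<Longrightarrow>
     card (dominating_words b' s) = card (dominating_words b s)"
  by (simp add: card_dominating_words_le order.antisym)

definition union_profile :: "nat list \<Rightarrow> nat \<Rightarrow> int set \<Rightarrow> nat" where
  "union_profile u N K = (\<Sum>c\<in>{2..N}. card (\<Union>x\<in>K. (+) x ` level u c))"

lemma union_level_eq_least_letter_ge:
  assumes T: "T \<subseteq> window_starts u l" and c: "2 \<le> c"
  shows "(\<Union>x \<in> (\<lambda>j. int j - 1) ` T. (+) x ` level u c) = int ` {p\<in>{..<l}. c \<le> least_letter u T p}"
proof (intro equalityI subsetI)
  fix x assume "x \<in> (\<Union>x \<in> (\<lambda>j. int j - 1) ` T. (+) x ` level u c)"
  then obtain j i where j: "j \<in> T" and i: "i \<in> level u c" and x: "x = int j - 1 + i" by blast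
  have "1 \<le> j" "j + length u - 1 \<le> l" using T j unfolding window_starts_def by auto
  moreover have "0 \<le> i" "nat i < length u" "c \<le> u ! nat i" using i unfolding level_def by auto
  ultimately have "nat x < l" "nat x + 1 - j = nat i" "j \<le> nat x + 1" "int (nat x) = x"
    using x by linarith+
  with j \<open>c \<le> u ! nat i\<close> \<open>nat i < length u\<close> have "c \<le> least_letter u T (nat x)"
    unfolding least_letter_ge_iff by (intro disjI2 bexI[of _ j]) auto
  with \<open>nat x < l\<close> \<open>int (nat x) = x\<close> show "x \<in> int ` {p\<in>{..<l}. c \<le> least_letter u T p}" by force
next
  fix x assume "x \<in> int ` {p\<in>{..<l}. c \<le> least_letter u T p}"
  then obtain p where p: "p < l" "c \<le> least_letter u T p" "x = int p" by blast
  then obtain j where j: "j \<in> T" "j \<le> p + 1" "p + 1 - j < length u" "c \<le> u ! (p + 1 - j)"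
    using c unfolding least_letter_ge_iff by auto
  then have "int (p + 1 - j) \<in> level u c" unfolding level_def mem_Collect_eq nat_int by simp
  moreover have "x = int j - 1 + int (p + 1 - j)" using j p by auto
  ultimately show "x \<in> (\<Union>x \<in> (\<lambda>j. int j - 1) ` T. (+) x ` level u c)" using j by blast
qed

lemma sum_list_least_word:
  assumes T: "T \<subseteq> window_starts u l" and N: "\<forall>a\<in>set u. a \<le> N" "1 \<le> N"
  shows "sum_list (least_word u T l) = l + union_profile u N ((\<lambda>j. int j - 1) ` T)"
proof -
  have le_N: "least_letter u T p \<le> N" for p
    using N by (auto simp: least_letter_le_iff)
  have "{c\<in>{1..N}. c \<le> least_letter u T p} = {1..least_letter u T p}" for p
    using le_N[of p] by auto
  then have "least_letter u T p = card {c\<in>{1..N}. c \<le> least_letter u T p}" for p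
    by simp
  then have "sum_list (least_word u T l) = (\<Sum>p<l. \<Sum>c\<in>{1..N}. if c \<le> least_letter u T p then 1 else 0)"
    unfolding least_word_def by (simp add: sum_list_sum_nth atLeast0LessThan flip: sum.inter_filter)
  also have "\<dots> = (\<Sum>c\<in>{1..N}. \<Sum>p<l. if c \<le> least_letter u T p then 1 else 0)"
    by (rule sum.swap)
  also have "\<dots> = (\<Sum>c\<in>{1..N}. card {p\<in>{..<l}. c \<le> least_letter u T p})"
    by (simp only: card_eq_sum sum.inter_filter[OF finite_lessThan])
  also have "\<dots> = card {p\<in>{..<l}. 1 \<le> least_letter u T p} +
      (\<Sum>c\<in>{2..N}. card {p\<in>{..<l}. c \<le> least_letter u T p})"
    using N(2) by (simp add: sum.atLeast_Suc_atMost numeral_2_eq_2)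
  also have "{p\<in>{..<l}. 1 \<le> least_letter u T p} = {..<l}"
    using one_le_least_letter by blast
  also have "card {..<l} + (\<Sum>c\<in>{2..N}. card {p\<in>{..<l}. c \<le> least_letter u T p})
      = l + union_profile u N ((\<lambda>j. int j - 1) ` T)"
    unfolding union_profile_def using union_level_eq_least_letter_ge[OF T]
    by (simp add: card_image)
  finally show ?thesis .
qed

lemma union_profile_eq_if_levels_translated:
  assumes "levels_translated u v"
  shows "union_profile u N K = union_profile v N K"
  unfolding union_profile_def
proof (rule sum.cong[OF refl])
  fix c
  obtain t where t: "level v c = (+) t ` level u c"
    using assms unfolding levels_translated_def by blast
  have "(\<Union>x\<in>K. (+) x ` level v c) = (+) t ` (\<Union>x\<in>K. (+) x ` level u c)"
    unfolding t by (auto simp: image_image add_ac image_UN)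
  then show "card (\<Union>x\<in>K. (+) x ` level u c) = card (\<Union>x\<in>K. (+) x ` level v c)"
    by (simp add: card_image)
qed

lemma levels_translated_imp_super_strong_wilf:
  assumes uv: "levels_translated u v"
  shows "super_strong_wilf u v"
  unfolding super_strong_wilf_iff_card_words_with_Em_superset
proof (intro allI)
  fix l s T
  have windows: "window_starts v l = window_starts u l"
    using uv unfolding levels_translated_def window_starts_def by simp
  show "card (words_with_Em_superset u l s T) = card (words_with_Em_superset v l s T)"
  proof (cases "T \<subseteq> window_starts u l")
    case False
    then have "words_with_Em_superset x l s T = {}" if "window_starts x l = window_starts u l" for x
      using that Em_subset_window_starts[of x] unfolding words_with_Em_superset_def by fastforce
    with windows show ?thesis by simp
  next
    case True
    define N where "N = Suc (sum_list u + sum_list v)"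
    have "\<forall>a\<in>set u. a \<le> N" "\<forall>a\<in>set v. a \<le> N" "1 \<le> N"
      unfolding N_def by (auto dest: member_le_sum_list)
    then have "sum_list (least_word u T l) = sum_list (least_word v T l)"
      using True windows uv by (simp add: sum_list_least_word union_profile_eq_if_levels_translated)
    then show ?thesis
      using True windows
      by (simp add: words_with_Em_superset_eq_dominating_words card_dominating_words_eq least_word_def)
  qed
qed

lemma sum_list_le_if_card_dominating_words_le:
  assumes "card (dominating_words b (sum_list b)) \<le> card (dominating_words b' (sum_list b))"
  shows "sum_list b' \<le> sum_list b"
proof -
  have "card (dominating_words b (sum_list b)) \<noteq> 0"
    using self_mem_dominating_words[of b] by (auto simp: card_eq_0_iff)
  with assms obtain w where "w \<in> dominating_words b' (sum_list b)"
    by (metis card.empty ex_in_conv le_zero_eq)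
  then show ?thesis by (rule sum_list_le_if_mem_dominating_words)
qed

lemma super_strong_wilf_imp_union_profile_eq:
  assumes ssw: "super_strong_wilf u v" and len: "length u = length v"
    and N: "\<forall>a\<in>set u. a \<le> N" "\<forall>a\<in>set v. a \<le> N" "1 \<le> N"
    and K: "finite K" "\<forall>x\<in>K. 0 \<le> x"
  shows "union_profile u N K = union_profile v N K"
proof -
  define T where "T = (\<lambda>x. nat x + 1) ` K"
  define l where "l = (\<Sum>x\<in>K. nat x) + length u"
  have "nat x \<le> (\<Sum>x\<in>K. nat x)" if "x \<in> K" for x
    using K that by (intro member_le_sum) auto
  then have Tu: "T \<subseteq> window_starts u l" and Tv: "T \<subseteq> window_starts v l"
    using len unfolding T_def l_def window_starts_def by auto
  have K_eq: "(\<lambda>j. int j - 1) ` T = K"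
    unfolding T_def image_image using K(2) by (simp cong: image_cong)
  have "card (dominating_words (least_word x T l) s) = card (dominating_words (least_word y T l) s)"
    if "x \<in> {u, v}" "y \<in> {u, v}" for x y s
    using ssw that Tu Tv unfolding super_strong_wilf_iff_card_words_with_Em_superset
    by (auto simp flip: words_with_Em_superset_eq_dominating_words)
  then have "sum_list (least_word u T l) = sum_list (least_word v T l)"
    by (metis insertI1 insertI2 order.refl sum_list_le_if_card_dominating_words_le order.antisym)
  then show ?thesis
    using sum_list_least_word[OF Tu N(1,3)] sum_list_least_word[OF Tv N(2,3)] K_eq by simp
qed

section \<open>Intersection profiles\<close>

lemma sum_alternating_nonempty_subsets:
  assumes "finite K" "K \<noteq> {}"
  shows "(\<Sum>B | B \<subseteq> K \<and> B \<noteq> {}. (- 1) ^ (card B + 1) :: int) = 1"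
proof -
  have "int (card (\<Union>((\<lambda>_. UNIV :: unit set) ` K)))
      = (\<Sum>B | B \<subseteq> K \<and> B \<noteq> {}. (- 1) ^ (card B + 1) * int (card (\<Inter>((\<lambda>_. UNIV :: unit set) ` B))))"
    by (rule Incl_Excl_UN) (auto simp: card_Un_disjnt assms)
  with assms show ?thesis by (simp cong: sum.cong)
qed

lemma int_card_INT_eq_alternating_sum_card_UN:
  fixes A :: "'a \<Rightarrow> 'b set"
  assumes K: "finite K" "K \<noteq> {}" and fin: "\<And>j. j \<in> K \<Longrightarrow> finite (A j)"
  shows "int (card (\<Inter>j\<in>K. A j))
       = (\<Sum>B | B \<subseteq> K \<and> B \<noteq> {}. (- 1) ^ (card B + 1) * int (card (\<Union>j\<in>B. A j)))"
proof -
  define U where "U = (\<Union>j\<in>K. A j)"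
  define f where "f X = int (card (X \<inter> U))" for X
  have U: "finite U" using K fin unfolding U_def by blast
  have "f (S \<union> T) = f S + f T" if "disjnt S T" for S T
  proof -
    have "card ((S \<union> T) \<inter> U) = card (S \<inter> U) + card (T \<inter> U)"
      unfolding Int_Un_distrib2 using that U by (intro card_Un_disjoint) (auto simp: disjnt_def)
    then show ?thesis unfolding f_def by simp
  qed
  then have "f (\<Union>j\<in>K. - A j) = (\<Sum>B | B \<subseteq> K \<and> B \<noteq> {}. (- 1) ^ (card B + 1) * f (\<Inter>j\<in>B. - A j))"
    using K(1) by (rule Incl_Excl_UN)
  also have "\<dots> = (\<Sum>B | B \<subseteq> K \<and> B \<noteq> {}. (- 1) ^ (card B + 1) * (int (card U) - int (card (\<Union>j\<in>B. A j))))"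
  proof (rule sum.cong[OF refl])
    fix B assume "B \<in> {B. B \<subseteq> K \<and> B \<noteq> {}}"
    then have "(\<Inter>j\<in>B. - A j) \<inter> U = U - (\<Union>j\<in>B. A j)" "(\<Union>j\<in>B. A j) \<subseteq> U"
      unfolding U_def by auto
    with U show "(- 1) ^ (card B + 1) * f (\<Inter>j\<in>B. - A j)
        = (- 1) ^ (card B + 1) * (int (card U) - int (card (\<Union>j\<in>B. A j)))"
      unfolding f_def by (simp add: card_Diff_subset of_nat_diff card_mono finite_subset)
  qed
  also have "\<dots> = int (card U) * (\<Sum>B | B \<subseteq> K \<and> B \<noteq> {}. (- 1) ^ (card B + 1))
      - (\<Sum>B | B \<subseteq> K \<and> B \<noteq> {}. (- 1) ^ (card B + 1) * int (card (\<Union>j\<in>B. A j)))"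
    by (simp only: right_diff_distrib sum_subtractf sum_distrib_left mult.commute)
  finally have "f (\<Union>j\<in>K. - A j) = int (card U)
      - (\<Sum>B | B \<subseteq> K \<and> B \<noteq> {}. (- 1) ^ (card B + 1) * int (card (\<Union>j\<in>B. A j)))"
    by (simp only: sum_alternating_nonempty_subsets[OF K] mult_1_right)
  moreover have "(\<Union>j\<in>K. - A j) \<inter> U = U - (\<Inter>j\<in>K. A j)" "(\<Inter>j\<in>K. A j) \<subseteq> U"
    using K(2) unfolding U_def by auto
  ultimately show ?thesis
    using U unfolding f_def by (simp add: card_Diff_subset of_nat_diff card_mono finite_subset)
qed
definition intersection_profile :: "nat list \<Rightarrow> nat \<Rightarrow> int set \<Rightarrow> nat" where
  "intersection_profile u N K = (\<Sum>c\<in>{2..N}. card (\<Inter>x\<in>K. (+) x ` level u c))"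

lemma intersection_profile_eq_alternating_sum:
  assumes "finite K" "K \<noteq> {}"
  shows "int (intersection_profile u N K)
       = (\<Sum>B | B \<subseteq> K \<and> B \<noteq> {}. (- 1) ^ (card B + 1) * int (union_profile u N B))"
proof -
  have "int (intersection_profile u N K) = (\<Sum>c\<in>{2..N}. \<Sum>B | B \<subseteq> K \<and> B \<noteq> {}.
      (- 1) ^ (card B + 1) * int (card (\<Union>x\<in>B. (+) x ` level u c)))"
    unfolding intersection_profile_def of_nat_sum
    using assms by (intro sum.cong refl int_card_INT_eq_alternating_sum_card_UN) auto
  also have "\<dots> = (\<Sum>B | B \<subseteq> K \<and> B \<noteq> {}. (- 1) ^ (card B + 1) * int (union_profile u N B))"
    unfolding union_profile_def of_nat_sum sum_distrib_left by (rule sum.swap)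
  finally show ?thesis .
qed

lemma intersection_profile_eq_if_union_profile_eq:
  assumes K: "finite K" "K \<noteq> {}"
    and eq: "\<And>B. B \<subseteq> K \<Longrightarrow> B \<noteq> {} \<Longrightarrow> union_profile u N B = union_profile v N B"
  shows "intersection_profile u N K = intersection_profile v N K"
proof -
  have "(\<Sum>B | B \<subseteq> K \<and> B \<noteq> {}. (- 1) ^ (card B + 1) * int (union_profile u N B))
      = (\<Sum>B | B \<subseteq> K \<and> B \<noteq> {}. (- 1) ^ (card B + 1) * int (union_profile v N B))"
    using eq by (intro sum.cong) auto
  then have "int (intersection_profile u N K) = int (intersection_profile v N K)"
    by (simp only: intersection_profile_eq_alternating_sum[OF K])
  then show ?thesis by simp
qed

lemma mem_translate_iff: "y \<in> (+) x ` M \<longleftrightarrow> y - x \<in> (M :: int set)"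
  by (auto intro: rev_image_eqI[of "y - x"])

lemma mem_INT_reflected_translates_iff:
  fixes L L' :: "int set"
  shows "y \<in> (\<Inter>x \<in> (\<lambda>i. m - i) ` L. (+) x ` L') \<longleftrightarrow> (+) (y - m) ` L \<subseteq> L'"
proof -
  have "y \<in> (\<Inter>x \<in> (\<lambda>i. m - i) ` L. (+) x ` L') \<longleftrightarrow> (\<forall>i\<in>L. y - (m - i) \<in> L')"
    unfolding image_image INT_iff mem_translate_iff ..
  also have "\<dots> \<longleftrightarrow> (+) (y - m) ` L \<subseteq> L'"
    unfolding image_subset_iff by (simp add: algebra_simps)
  finally show ?thesis .
qed

lemma INT_translates_translate:
  fixes L :: "int set"
  shows "(\<Inter>x\<in>K. (+) x ` ((+) t ` L)) = (+) t ` (\<Inter>x\<in>K. (+) x ` L)"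
  unfolding set_eq_iff INT_iff mem_translate_iff by (simp add: diff_diff_eq add.commute)

lemma INT_translates_eq_empty:
  fixes L :: "int set"
  assumes "finite L" "card L < card K"
  shows "(\<Inter>x\<in>K. (+) x ` L) = {}"
proof (rule ccontr)
  assume "(\<Inter>x\<in>K. (+) x ` L) \<noteq> {}"
  then obtain y where "\<forall>x\<in>K. y \<in> (+) x ` L" by blast
  then have "(\<lambda>x. y - x) ` K \<subseteq> L" by auto
  moreover have "inj_on (\<lambda>x. y - x) K" by (auto simp: inj_on_def)
  ultimately have "card K \<le> card L" using assms(1) by (metis card_image card_mono)
  with assms(2) show False by simp
qed

section \<open>Permutations\<close>

lemma pos_words_if_permutation: "u \<in> permutations_of_set {1..n} \<Longrightarrow> u \<in> pos_words"
  unfolding pos_words_def by (auto dest: permutations_of_setD)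

lemma card_level_permutation:
  assumes u: "u \<in> permutations_of_set {1..n}" and c: "1 \<le> c"
  shows "card (level u c) = n + 1 - c"
proof -
  have "level u c = int ` {i. i < length u \<and> c \<le> u ! i}"
  proof (intro equalityI subsetI)
    fix x assume "x \<in> level u c"
    then have "nat x \<in> {i. i < length u \<and> c \<le> u ! i}" "x = int (nat x)"
      unfolding level_def by auto
    then show "x \<in> int ` {i. i < length u \<and> c \<le> u ! i}" by blast
  qed (auto simp: level_def)
  then have "card (level u c) = length (filter ((\<le>) c) u)"
    by (simp add: card_image length_filter_conv_card)
  also have "\<dots> = card ({x. c \<le> x} \<inter> set u)"
    using permutations_of_setD(2)[OF u] by (simp add: distinct_length_filter)
  also have "{x. c \<le> x} \<inter> set u = {c..n}"
    unfolding permutations_of_setD(1)[OF u] using c by auto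
  finally show ?thesis by simp
qed

text \<open>The reflection \<open>K\<close> of level \<open>c\<close> of \<open>u\<close> is chosen so that a common point of the translates
  \<open>x + level v c\<close>, \<open>x \<in> K\<close>, is the same as a translate of level \<open>c\<close> of \<open>u\<close> inside level \<open>c\<close>
  of \<open>v\<close>. In the intersection profile, lower levels contribute equally by induction and higher
  levels not at all, being smaller than \<open>K\<close>; so the contributions of level \<open>c\<close> agree, and
  that of \<open>u\<close> is positive.\<close>

lemma level_translated_if_intersection_profile_eq:
  assumes u: "u \<in> permutations_of_set {1..n}" and v: "v \<in> permutations_of_set {1..n}"
    and c: "c \<in> {2..n}"
    and lower: "\<And>c'. c' < c \<Longrightarrow> \<exists>t. level v c' = (+) t ` level u c'"
    and profile: "intersection_profile u n K = intersection_profile v n K"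
    and K: "K = (\<lambda>i. int n - i) ` level u c"
  shows "\<exists>t. level v c = (+) t ` level u c"
proof -
  define meet where "meet w d = (\<Inter>x\<in>K. (+) x ` level w d)" for w d
  have card_K: "card K = n + 1 - c"
    unfolding K using card_level_permutation[OF u] c by (subst card_image) (auto simp: inj_on_def)
  have "card (meet u d) = card (meet v d)" if d: "d \<in> {2..n} - {c}" for d
  proof (cases "d < c")
    case True
    then obtain t where "level v d = (+) t ` level u d" using lower by blast
    then show ?thesis unfolding meet_def by (simp add: INT_translates_translate card_image)
  next
    case False
    with d have "card (level w d) < card K" if "w \<in> {u, v}" for w
      using that card_level_permutation[OF u] card_level_permutation[OF v] card_K by auto
    then show ?thesis unfolding meet_def using INT_translates_eq_empty by simp
  qed
  with profile c have "card (meet u c) = card (meet v c)"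
    unfolding intersection_profile_def meet_def[symmetric] by (simp add: sum.remove)
  moreover have "int n \<in> meet u c"
    unfolding meet_def K mem_INT_reflected_translates_iff by simp
  moreover have "finite (meet u c)"
  proof -
    obtain x where "x \<in> K" using card_K c by fastforce
    then have "meet u c \<subseteq> (+) x ` level u c" unfolding meet_def by blast
    then show ?thesis by (rule finite_subset) simp
  qed
  ultimately have "meet v c \<noteq> {}" by force
  then obtain y where "y \<in> meet v c" by blast
  then have sub: "(+) (y - int n) ` level u c \<subseteq> level v c"
    unfolding meet_def K mem_INT_reflected_translates_iff .
  moreover have "card ((+) (y - int n) ` level u c) = card (level v c)"
    using card_level_permutation[OF u] card_level_permutation[OF v] c by (simp add: card_image)
  ultimately have "(+) (y - int n) ` level u c = level v c" by (intro card_subset_eq) simp_all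
  then show ?thesis by (intro exI[of _ "y - int n"]) simp
qed

lemma levels_translated_if_intersection_profile_eq:
  assumes u: "u \<in> permutations_of_set {1..n}" and v: "v \<in> permutations_of_set {1..n}"
    and profile: "\<And>K. finite K \<Longrightarrow> K \<noteq> {} \<Longrightarrow> \<forall>x\<in>K. 0 \<le> x \<Longrightarrow>
                     intersection_profile u n K = intersection_profile v n K"
  shows "levels_translated u v"
proof -
  have len: "length u = n" "length v = n"
    using u v by (simp_all add: length_finite_permutations_of_set)
  have "\<exists>t. level v c = (+) t ` level u c" for c
  proof (induction c rule: less_induct)
    case (less c)
    consider "c \<le> 1" | "n < c" | "c \<in> {2..n}" by force
    then show ?case
    proof cases
      case 1
      then have "level v c = level u c"
        using level_le_one pos_words_if_permutation u v len by metis
      then show ?thesis by (intro exI[of _ 0]) simp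
    next
      case 2
      then have "card (level u c) = 0" "card (level v c) = 0"
        using card_level_permutation[OF u] card_level_permutation[OF v] by auto
      then have "level u c = {}" "level v c = {}" by (simp_all add: card_0_eq)
      then show ?thesis by auto
    next
      case 3
      define K where "K = (\<lambda>i. int n - i) ` level u c"
      have "K \<noteq> {}" using card_level_permutation[OF u, of c] 3 unfolding K_def by auto
      moreover have "\<forall>x\<in>K. 0 \<le> x" using len unfolding K_def level_def by auto
      ultimately have "intersection_profile u n K = intersection_profile v n K"
        by (intro profile) (simp_all add: K_def)
      with less.IH show ?thesis
        by (intro level_translated_if_intersection_profile_eq[OF u v 3 _ _ K_def])
    qed
  qed
  with len show ?thesis unfolding levels_translated_def by simp
qed

lemma super_strong_wilf_imp_levels_translated:
  assumes n: "1 \<le> n" and u: "u \<in> permutations_of_set {1..n}" and v: "v \<in> permutations_of_set {1..n}"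
    and ssw: "super_strong_wilf u v"
  shows "levels_translated u v"
proof (rule levels_translated_if_intersection_profile_eq[OF u v])
  fix K :: "int set" assume K: "finite K" "K \<noteq> {}" "\<forall>x\<in>K. 0 \<le> x"
  have "length u = length v" using u v by (simp add: length_finite_permutations_of_set)
  moreover have "\<forall>a\<in>set u. a \<le> n" "\<forall>a\<in>set v. a \<le> n"
    using u v by (auto dest: permutations_of_setD)
  ultimately have "union_profile u n B = union_profile v n B" if "B \<subseteq> K" for B
    using that K n by (intro super_strong_wilf_imp_union_profile_eq[OF ssw]) (auto intro: finite_subset)
  with K show "intersection_profile u n K = intersection_profile v n K"
    by (intro intersection_profile_eq_if_union_profile_eq) auto
qed

theorem mainTheorem12:
  fixes n :: nat and u v :: "nat list"
  assumes "n \<ge> 1"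
    and "u \<in> permutations_of_set {1..n}"
    and "v \<in> permutations_of_set {1..n}"
  shows "strongly_shift_equiv u v \<longleftrightarrow> super_strong_wilf u v"
proof
  assume "strongly_shift_equiv u v"
  then show "super_strong_wilf u v"
    by (intro levels_translated_imp_super_strong_wilf strongly_shift_equiv_imp_levels_translated)
next
  assume "super_strong_wilf u v"
  with assms have "levels_translated u v" by (rule super_strong_wilf_imp_levels_translated)
  with assms(2,3) show "strongly_shift_equiv u v"
    by (intro levels_translated_imp_strongly_shift_equiv pos_words_if_permutation)
qed

end
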